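(* Let $\{(\mathbf{x}^k,\mathbf{y}^k,\boldsymbol{\gamma}^k)\}$ be generated by the two-block linearized ADMM below, applied under the standing assumptions (i)–(iv) below. Then for every $k\ge0$, $$L_\beta(\mathbf{x}^k,\mathbf{y}^k,\boldsymbol{\gamma}^k)-L_\beta(\mathbf{x}^{k+1},\mathbf{y}^k,\boldsymbol{\gamma}^k)\ge C_0\|\mathbf{x}^{k+1}-\mathbf{x}^k\|^2,$$ where $C_0=\frac{L_x-L_g-\beta L_{\mathbf{A}}}{2}$ and $L_{\mathbf{A}}$ is the largest eigenvalue of $\mathbf{A}^{\rm T}\mathbf{A}$.
   Context: Problem: minimize $g(\mathbf{x},\mathbf{y})+f(\mathbf{x})+h(\mathbf{y})$ s.t. $\mathbf{A}\mathbf{x}+\mathbf{B}\mathbf{y}=\mathbf{0}$, $\mathbf{x}\in\mathbb{R}^p$, $\mathbf{y}\in\mathbb{R}^q$, $\mathbf{A}\in\mathbb{R}^{n\times p}$, $\mathbf{B}\in\mathbb{R}^{n\times q}$; $f$ possibly nonconvex nonsmooth. Standing assumptions: (i) $\nabla h$ is $L_h$-Lipschitz; (ii) $\nabla g$ is $L_g$-Lipschitz; (iii) $g+f+h$ is lower bounded on the feasible set $\{\mathbf{A}\mathbf{x}+\mathbf{B}\mathbf{y}=\mathbf{0}\}$ and coercive w.r.t. $\mathbf{y}$ over it; (iv) $\mathbf{B}$ has full column rank and $\mathrm{Im}(\mathbf{A})\subset\mathrm{Im}(\mathbf{B})$. $L_\beta(\mathbf{x},\mathbf{y},\boldsymbol{\gamma})=g(\mathbf{x},\mathbf{y})+f(\mathbf{x})+h(\mathbf{y})+\langle\boldsymbol{\gamma},\mathbf{A}\mathbf{x}+\mathbf{B}\mathbf{y}\rangle+\frac{\beta}{2}\|\mathbf{A}\mathbf{x}+\mathbf{B}\mathbf{y}\|^2$.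 Algorithm (parameters $L_x,L_y,\beta>0$): $\mathbf{x}^{k+1}\in\arg\min\bar f^k$, $\mathbf{y}^{k+1}=\arg\min\bar h^k$, $\boldsymbol{\gamma}^{k+1}=\boldsymbol{\gamma}^k+\beta(\mathbf{A}\mathbf{x}^{k+1}+\mathbf{B}\mathbf{y}^{k+1})$, where $\bar f^k(\mathbf{x})=f(\mathbf{x})+\langle\boldsymbol{\gamma}^k,\mathbf{A}\mathbf{x}\rangle+\frac{L_x}{2}\|\mathbf{x}-\mathbf{x}^k\|^2+\langle\mathbf{x}-\mathbf{x}^k,\nabla_{\mathbf{x}}g(\mathbf{x}^k,\mathbf{y}^k)+\beta\mathbf{A}^{\rm T}(\mathbf{A}\mathbf{x}^k+\mathbf{B}\mathbf{y}^k)\rangle$, $\bar h^k(\mathbf{y})=\langle\boldsymbol{\gamma}^k,\mathbf{B}\mathbf{y}\rangle+\frac{L_y}{2}\|\mathbf{y}-\mathbf{y}^k\|^2+\frac{\beta}{2}\|\mathbf{A}\mathbf{x}^{k+1}+\mathbf{B}\mathbf{y}\|^2+\langle\mathbf{y}-\mathbf{y}^k,\nabla_{\mathbf{y}}g(\mathbf{x}^{k+1},\mathbf{y}^k)+\nabla h(\mathbf{y}^k)\rangle$. *)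

theory Defs
  imports "HOL-Analysis.Analysis"
begin

definition aug_lag ::
  "(real^'p \<Rightarrow> real^'q \<Rightarrow> real) \<Rightarrow> (real^'p \<Rightarrow> real) \<Rightarrow> (real^'q \<Rightarrow> real) \<Rightarrow>
   real^'p^'n \<Rightarrow> real^'q^'n \<Rightarrow> real \<Rightarrow> real^'p \<Rightarrow> real^'q \<Rightarrow> real^'n \<Rightarrow> real" where
  "aug_lag g f h A B \<beta> x y \<gamma> =
     g x y + f x + h y + \<gamma> \<bullet> (A *v x + B *v y) + \<beta> / 2 * (norm (A *v x + B *v y))\<^sup>2"

definition is_eigenvalue :: "real^'n^'n \<Rightarrow> real \<Rightarrow> bool" where
  "is_eigenvalue M l \<longleftrightarrow> (\<exists>v. v \<noteq> 0 \<and> M *v v = l *\<^sub>R v)"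

definition is_largest_eigenvalue :: "real^'n^'n \<Rightarrow> real \<Rightarrow> bool" where
  "is_largest_eigenvalue M l \<longleftrightarrow> is_eigenvalue M l \<and> (\<forall>m. is_eigenvalue M m \<longrightarrow> m \<le> l)"

definition fbar ::
  "(real^'p \<Rightarrow> real) \<Rightarrow> real^'p^'n \<Rightarrow> real^'q^'n \<Rightarrow> real \<Rightarrow> real \<Rightarrow> real^'p \<Rightarrow> real^'n
   \<Rightarrow> real^'p \<Rightarrow> real^'q \<Rightarrow> real^'p \<Rightarrow> real" where
  "fbar f A B \<beta> Lx gx \<gamma>k xk yk x =
     f x + \<gamma>k \<bullet> (A *v x) + Lx / 2 * (norm (x - xk))\<^sup>2
     + (x - xk) \<bullet> (gx + \<beta> *\<^sub>R (transpose A *v (A *v xk + B *v yk)))"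

definition hbar ::
  "real^'p^'n \<Rightarrow> real^'q^'n \<Rightarrow> real \<Rightarrow> real \<Rightarrow> real^'q \<Rightarrow> real^'n
   \<Rightarrow> real^'p \<Rightarrow> real^'q \<Rightarrow> real^'q \<Rightarrow> real" where
  "hbar A B \<beta> Ly gyh \<gamma>k xk1 yk y =
     \<gamma>k \<bullet> (B *v y) + Ly / 2 * (norm (y - yk))\<^sup>2 + \<beta> / 2 * (norm (A *v xk1 + B *v y))\<^sup>2
     + (y - yk) \<bullet> gyh"

end

theory Submission
  imports Defs
begin

text \<open>With d = x^{k+1} - x^k, comparing the minimizer of the linearized subproblem with the
  feasible choice x^k shows that f + <gamma, A x> drops by at least L_x/2 |d|^2 plus the linear
  terms <grad_x g, d> + beta <A d, A x^k + B y^k>. The descent lemma bounds the increase of g by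
  the first of these plus L_g/2 |d|^2, and the exact expansion of the penalty gives the second
  plus beta/2 |A d|^2 <= beta L_A/2 |d|^2 (Rayleigh quotient bound). The linear terms cancel.
  Only the x-update, the smoothness of g and the spectral bound enter this one-step estimate.\<close>

lemma descent_lemma:
  fixes \<phi> :: "'a::real_inner \<Rightarrow> real"
  assumes grad: "\<And>z. (\<phi> has_derivative (\<lambda>u. G z \<bullet> u)) (at z)"
    and lip: "\<And>z w. norm (G z - G w) \<le> L * norm (z - w)"
  shows "\<phi> b \<le> \<phi> a + G a \<bullet> (b - a) + L / 2 * (norm (b - a))\<^sup>2"
proof -
  define d where "d = b - a"
  define \<psi> where "\<psi> t = \<phi> (a + t *\<^sub>R d) - t * (G a \<bullet> d) - L / 2 * t\<^sup>2 * (norm d)\<^sup>2" for t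
  have "\<psi> 1 \<le> \<psi> 0"
  proof (rule DERIV_nonpos_imp_nonincreasing[of 0 1 \<psi>])
    fix t :: real
    assume t: "0 \<le> t" "t \<le> 1"
    have "((\<lambda>t. a + t *\<^sub>R d) has_derivative (\<lambda>s. s *\<^sub>R d)) (at t)"
      by (auto intro!: derivative_eq_intros)
    from diff_chain_at[OF this grad]
    have "((\<lambda>t. \<phi> (a + t *\<^sub>R d)) has_derivative (\<lambda>s. G (a + t *\<^sub>R d) \<bullet> (s *\<^sub>R d))) (at t)"
      by (simp add: o_def)
    then have "((\<lambda>t. \<phi> (a + t *\<^sub>R d)) has_real_derivative G (a + t *\<^sub>R d) \<bullet> d) (at t)"
      by (simp add: has_real_derivative_iff_has_vector_derivative has_vector_derivative_def
          mult.commute)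
    then have D: "(\<psi> has_real_derivative
        G (a + t *\<^sub>R d) \<bullet> d - G a \<bullet> d - L / 2 * (2 * t) * (norm d)\<^sup>2) (at t)"
      unfolding \<psi>_def by (auto intro!: derivative_eq_intros)
    have "(G (a + t *\<^sub>R d) - G a) \<bullet> d \<le> norm (G (a + t *\<^sub>R d) - G a) * norm d"
      by (rule norm_cauchy_schwarz)
    also have "\<dots> \<le> L * (t * norm d) * norm d"
      using lip[of "a + t *\<^sub>R d" a] t by (simp add: mult_right_mono)
    finally have "G (a + t *\<^sub>R d) \<bullet> d - G a \<bullet> d - L / 2 * (2 * t) * (norm d)\<^sup>2 \<le> 0"
      by (simp add: inner_diff_left power2_eq_square algebra_simps)
    with D show "\<exists>y. DERIV \<psi> t :> y \<and> y \<le> 0" by blast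
  qed simp
  then show ?thesis
    by (simp add: \<psi>_def d_def)
qed

lemma descent_lemma_fst:
  fixes g :: "'a::real_inner \<Rightarrow> 'b::real_inner \<Rightarrow> real"
  assumes grad: "\<And>z. ((\<lambda>z. g (fst z) (snd z)) has_derivative (\<lambda>u. G z \<bullet> u)) (at z)"
    and lip: "\<And>z w. norm (G z - G w) \<le> L * norm (z - w)"
  shows "g b y \<le> g a y + fst (G (a, y)) \<bullet> (b - a) + L / 2 * (norm (b - a))\<^sup>2"
proof (rule descent_lemma[where \<phi> = "\<lambda>x. g x y"])
  fix z :: 'a
  have "((\<lambda>x. (x, y)) has_derivative (\<lambda>u. (u, 0))) (at z)"
    by (auto intro!: derivative_eq_intros)
  from diff_chain_at[OF this grad[of "(z, y)"]]
  have "((\<lambda>x. g x y) has_derivative (\<lambda>u. G (z, y) \<bullet> (u, 0))) (at z)"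
    by (simp add: o_def)
  then show "((\<lambda>x. g x y) has_derivative (\<lambda>u. fst (G (z, y)) \<bullet> u)) (at z)"
    by (simp add: inner_prod_def)
next
  fix z w :: 'a
  have "norm (fst (G (z, y)) - fst (G (w, y))) \<le> norm (G (z, y) - G (w, y))"
    by (metis fst_diff norm_fst_le prod.collapse)
  also have "\<dots> \<le> L * norm (z - w)"
    using lip[of "(z, y)" "(w, y)"] by simp
  finally show "norm (fst (G (z, y)) - fst (G (w, y))) \<le> L * norm (z - w)" .
qed

lemma linear_norm_attains_max_on_sphere:
  fixes f :: "'a::euclidean_space \<Rightarrow> 'b::real_normed_vector"
  assumes "linear f"
  obtains u where "norm u = 1" "\<And>v. norm (f v) \<le> norm (f u) * norm v"
proof -
  have "continuous_on (sphere 0 1) (\<lambda>v. norm (f v))"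
    using assms by (intro continuous_on_norm linear_continuous_on) (simp add: linear_conv_bounded_linear)
  moreover have "sphere (0::'a) 1 \<noteq> {}" by simp
  ultimately obtain u where u: "u \<in> sphere 0 1"
    and max: "\<And>v. v \<in> sphere 0 1 \<Longrightarrow> norm (f v) \<le> norm (f u)"
    using continuous_attains_sup[OF compact_sphere] by blast
  have "norm (f v) \<le> norm (f u) * norm v" for v
  proof (cases "v = 0")
    case False
    have "norm (f v) / norm v = norm (f (inverse (norm v) *\<^sub>R v))"
      by (simp add: linear_scale[OF assms] divide_inverse mult.commute)
    also have "\<dots> \<le> norm (f u)"
      using False by (intro max) simp
    finally show ?thesis
      using False by (simp add: divide_le_eq)
  qed (simp add: linear_0[OF assms])
  with u show thesis by (intro that) simp_all
qed

lemma linear_coeff_eq_0_if_quadratic_nonpos: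
  fixes a b :: real
  assumes "\<And>t. 2 * t * a + t\<^sup>2 * b \<le> 0"
  shows "a = 0"
proof -
  define c where "c = \<bar>b\<bar> + 1"
  have c: "c > 0" "2 * c + b > 0" by (auto simp: c_def)
  have "2 * (a / c) * a + (a / c)\<^sup>2 * b \<le> 0" by (rule assms)
  then have "a\<^sup>2 * (2 * c + b) / c\<^sup>2 \<le> 0"
    using c by (simp add: field_simps power2_eq_square)
  then have "a\<^sup>2 * (2 * c + b) \<le> 0"
    using c by (simp add: divide_le_0_iff)
  with c show "a = 0"
    by (simp add: mult_le_0_iff)
qed

lemma power2_norm_add_scaleR:
  fixes a b :: "'a::real_inner"
  shows "(norm (a + t *\<^sub>R b))\<^sup>2 = (norm a)\<^sup>2 + 2 * t * (a \<bullet> b) + t\<^sup>2 * (norm b)\<^sup>2"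
  unfolding power2_norm_eq_inner
  by (simp add: inner_add_left inner_add_right inner_commute power2_eq_square algebra_simps)

lemma inner_transpose_matrix: "(transpose A *v z) \<bullet> w = z \<bullet> (A *v w)"
  for A :: "real^'p^'n"
  by (simp add: dot_lmul_matrix)

text \<open>First-order optimality of the Rayleigh quotient |A v|^2 / |v|^2 at its maximizer.\<close>

lemma norm_maximizer_is_eigenvector:
  fixes A :: "real^'p^'n"
  assumes u: "norm u = 1" and max: "\<And>v. norm (A *v v) \<le> norm (A *v u) * norm v"
  shows "(transpose A ** A) *v u = (norm (A *v u))\<^sup>2 *\<^sub>R u"
proof -
  define \<mu> where "\<mu> = (norm (A *v u))\<^sup>2"
  have orth: "(A *v u) \<bullet> (A *v w) = \<mu> * (u \<bullet> w)" for w
  proof -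
    have "2 * t * ((A *v u) \<bullet> (A *v w) - \<mu> * (u \<bullet> w)) + t\<^sup>2 * ((norm (A *v w))\<^sup>2 - \<mu> * (norm w)\<^sup>2) \<le> 0"
      for t
    proof -
      have "(norm (A *v (u + t *\<^sub>R w)))\<^sup>2 \<le> \<mu> * (norm (u + t *\<^sub>R w))\<^sup>2"
        using max[of "u + t *\<^sub>R w"] unfolding \<mu>_def
        by (metis norm_ge_zero power_mono power_mult_distrib)
      then show ?thesis
        using u by (simp add: \<mu>_def matrix_vector_right_distrib matrix_vector_mult_scaleR
            power2_norm_add_scaleR algebra_simps)
    qed
    then show ?thesis
      using linear_coeff_eq_0_if_quadratic_nonpos by fastforce
  qed
  define e where "e = (transpose A ** A) *v u - \<mu> *\<^sub>R u"
  have "e = transpose A *v (A *v u) - \<mu> *\<^sub>R u"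
    by (simp only: e_def matrix_vector_mul_assoc)
  then have "e \<bullet> e = (transpose A *v (A *v u)) \<bullet> e - \<mu> * (u \<bullet> e)"
    by (metis inner_diff_left inner_scaleR_left)
  also have "\<dots> = (A *v u) \<bullet> (A *v e) - \<mu> * (u \<bullet> e)"
    by (simp only: inner_transpose_matrix)
  finally have "e \<bullet> e = (A *v u) \<bullet> (A *v e) - \<mu> * (u \<bullet> e)" .
  then have "e = 0"
    using orth[of e] by simp
  then show ?thesis
    by (simp add: e_def \<mu>_def)
qed

lemma norm_matrix_vector_sq_le_largest_eigenvalue:
  fixes A :: "real^'p^'n"
  assumes "is_largest_eigenvalue (transpose A ** A) LA"
  shows "(norm (A *v d))\<^sup>2 \<le> LA * (norm d)\<^sup>2"
proof -
  obtain u where u: "norm u = 1" and max: "\<And>v. norm (A *v v) \<le> norm (A *v u) * norm v"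
    using linear_norm_attains_max_on_sphere[OF matrix_vector_mul_linear] by blast
  have "is_eigenvalue (transpose A ** A) ((norm (A *v u))\<^sup>2)"
    unfolding is_eigenvalue_def using u norm_maximizer_is_eigenvector[OF u max]
    by (intro exI[of _ u]) auto
  then have "(norm (A *v u))\<^sup>2 \<le> LA"
    using assms unfolding is_largest_eigenvalue_def by blast
  moreover have "(norm (A *v d))\<^sup>2 \<le> (norm (A *v u))\<^sup>2 * (norm d)\<^sup>2"
    by (metis max norm_ge_zero power_mono power_mult_distrib)
  ultimately show ?thesis
    by (meson mult_right_mono order_trans zero_le_power2)
qed

lemma aug_lag_decrease_of_x_step:
  fixes g :: "real^'p \<Rightarrow> real^'q \<Rightarrow> real"
    and Gg :: "(real^'p) \<times> (real^'q) \<Rightarrow> (real^'p) \<times> (real^'q)"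
    and A :: "real^'p^'n" and B :: "real^'q^'n"
  assumes g_grad: "\<And>z. ((\<lambda>z. g (fst z) (snd z)) has_derivative (\<lambda>u. Gg z \<bullet> u)) (at z)"
    and g_lip: "\<And>z w. norm (Gg z - Gg w) \<le> Lg * norm (z - w)"
    and LA: "is_largest_eigenvalue (transpose A ** A) LA"
    and \<beta>: "\<beta> \<ge> 0"
    and x_min: "fbar f A B \<beta> Lx (fst (Gg (x0, y))) \<gamma> x0 y x1
                \<le> fbar f A B \<beta> Lx (fst (Gg (x0, y))) \<gamma> x0 y x0"
  shows "aug_lag g f h A B \<beta> x0 y \<gamma> - aug_lag g f h A B \<beta> x1 y \<gamma>
           \<ge> (Lx - Lg - \<beta> * LA) / 2 * (norm (x1 - x0))\<^sup>2"
proof -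
  define d where "d = x1 - x0"
  define r where "r = A *v x0 + B *v y"
  define G where "G = fst (Gg (x0, y))"
  have Ax1: "A *v x1 = A *v x0 + A *v d"
    by (simp add: d_def matrix_vector_mult_diff_distrib)
  have "d \<bullet> (transpose A *v r) = r \<bullet> (A *v d)"
    by (simp only: inner_commute[of d] inner_transpose_matrix)
  then have subproblem: "f x1 + \<gamma> \<bullet> (A *v x1) + Lx / 2 * (norm d)\<^sup>2 + G \<bullet> d + \<beta> * (r \<bullet> (A *v d))
      \<le> f x0 + \<gamma> \<bullet> (A *v x0)"
    using x_min by (simp add: fbar_def d_def[symmetric] r_def[symmetric] G_def[symmetric]
        inner_add_right inner_commute)
  have descent: "g x1 y \<le> g x0 y + G \<bullet> d + Lg / 2 * (norm d)\<^sup>2"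
    unfolding G_def d_def by (rule descent_lemma_fst[OF g_grad g_lip])
  have penalty: "(norm (A *v x1 + B *v y))\<^sup>2 = (norm r)\<^sup>2 + 2 * (r \<bullet> (A *v d)) + (norm (A *v d))\<^sup>2"
    using power2_norm_add_scaleR[of r 1 "A *v d"] by (simp add: Ax1 r_def algebra_simps)
  have rayleigh: "\<beta> * (norm (A *v d))\<^sup>2 \<le> \<beta> * (LA * (norm d)\<^sup>2)"
    using norm_matrix_vector_sq_le_largest_eigenvalue[OF LA] \<beta> by (rule mult_left_mono)
  have "aug_lag g f h A B \<beta> x0 y \<gamma> - aug_lag g f h A B \<beta> x1 y \<gamma>
      = (g x0 y - g x1 y) + (f x0 + \<gamma> \<bullet> (A *v x0) - f x1 - \<gamma> \<bullet> (A *v x1))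
        - \<beta> * (r \<bullet> (A *v d)) - \<beta> / 2 * (norm (A *v d))\<^sup>2"
    unfolding aug_lag_def penalty by (simp add: r_def inner_add_right algebra_simps)
  also have "\<dots> \<ge> (Lx - Lg) / 2 * (norm d)\<^sup>2 - \<beta> / 2 * (LA * (norm d)\<^sup>2)"
    using subproblem descent rayleigh by (simp add: field_simps)
  finally show ?thesis
    by (simp add: d_def field_simps)
qed

theorem lemma5:
  fixes g :: "real^'p \<Rightarrow> real^'q \<Rightarrow> real"
    and f :: "real^'p \<Rightarrow> real"
    and h :: "real^'q \<Rightarrow> real"
    and Gg :: "(real^'p) \<times> (real^'q) \<Rightarrow> (real^'p) \<times> (real^'q)"
    and Gh :: "real^'q \<Rightarrow> real^'q"
    and A :: "real^'p^'n" and B :: "real^'q^'n"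
    and Lh Lg Lx Ly \<beta> LA :: real
    and x :: "nat \<Rightarrow> real^'p" and y :: "nat \<Rightarrow> real^'q" and \<gamma> :: "nat \<Rightarrow> real^'n"
  assumes h_grad: "\<And>v. (h has_derivative (\<lambda>u. Gh v \<bullet> u)) (at v)"
    and h_lip: "\<And>v w. norm (Gh v - Gh w) \<le> Lh * norm (v - w)"
    and g_grad: "\<And>z. ((\<lambda>z. g (fst z) (snd z)) has_derivative (\<lambda>u. Gg z \<bullet> u)) (at z)"
    and g_lip: "\<And>z w. norm (Gg z - Gg w) \<le> Lg * norm (z - w)"
    and lower_bdd: "\<exists>c. \<forall>u v. A *v u + B *v v = 0 \<longrightarrow> c \<le> g u v + f u + h v"
    and coercive: "\<And>M. \<exists>R. \<forall>u v. A *v u + B *v v = 0 \<and> norm v \<ge> R \<longrightarrow> g u v + f u + h v \<ge> M"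
    and B_rank: "inj ((*v) B)"
    and Im_AB: "range ((*v) A) \<subseteq> range ((*v) B)"
    and pos: "Lx > 0" "Ly > 0" "\<beta> > 0"
    and LA: "is_largest_eigenvalue (transpose A ** A) LA"
    and x_step: "\<And>k z. fbar f A B \<beta> Lx (fst (Gg (x k, y k))) (\<gamma> k) (x k) (y k) (x (Suc k))
                        \<le> fbar f A B \<beta> Lx (fst (Gg (x k, y k))) (\<gamma> k) (x k) (y k) z"
    and y_step: "\<And>k w. hbar A B \<beta> Ly (snd (Gg (x (Suc k), y k)) + Gh (y k)) (\<gamma> k) (x (Suc k)) (y k) (y (Suc k))
                        \<le> hbar A B \<beta> Ly (snd (Gg (x (Suc k), y k)) + Gh (y k)) (\<gamma> k) (x (Suc k)) (y k) w"
    and \<gamma>_step: "\<And>k. \<gamma> (Suc k) = \<gamma> k + \<beta> *\<^sub>R (A *v x (Suc k) + B *v y (Suc k))"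
  shows "\<forall>k. aug_lag g f h A B \<beta> (x k) (y k) (\<gamma> k) - aug_lag g f h A B \<beta> (x (Suc k)) (y k) (\<gamma> k)
             \<ge> (Lx - Lg - \<beta> * LA) / 2 * (norm (x (Suc k) - x k))\<^sup>2"
  using aug_lag_decrease_of_x_step[OF g_grad g_lip LA _ x_step] pos(3) by simp

end
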